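(* Let $p\in(0,1)$. Let $B_p(x)=\sum_{n\ge0}(1-p)^{\binom{n+1}{2}}x^n$, and let $h_m=[x^m]\,\frac{1}{B_p(x)}$ denote the coefficient of $x^m$ in the power series $1/B_p(x)$. (a) For every $n\ge1$, \[ h_n=\sum_{j=1}^{n}(-1)^j\sum_{\mathbf a\in\mathcal C_{n,j}}(1-p)^{\sum_{i=1}^j\binom{a_i+1}{2}}. \] (b) For $n\ge1$, let $X_n$ be the maximum weight of a directed path from $1$ to $n$ in the transitive tournament on $\{1,\ldots,n\}$ with independent $\mathrm{Bernoulli}(p)$ edge weights, and let $g(n)=1+\mathbb{E}[X_n]$. Then \[ g(n)=\sum_{m=0}^{n-1}(n-m)h_m=\sum_{m=0}^{n-1}(n-m)\sum_{\mathbf a\in\mathcal C_m}(-1)^{l(\mathbf a)}(1-p)^{\sum_{i=1}^{l(\mathbf a)}\binom{a_i+1}{2}}, \] and \[ g(n)=\sum_{m=0}^{n-1}\sum_{j=0}^{m}\sum_{k=0}^{j}(-1)^k\sum_{\mathbf a\in\mathcal C_{j,k}}(1-p)^{\sum_{i=1}^k\binom{a_i+1}{2}}. \]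
   Context: For integers $n\ge0$ and $i\ge0$, an $i$-composition of $n$ is a tuple $\mathbf a=(a_1,\ldots,a_i)$ of positive integers with $a_1+\cdots+a_i=n$. The set of all $i$-compositions of $n$ is $\mathcal C_{n,i}$. For $n\ge1$, $\mathcal C_n=\bigcup_{i=1}^n\mathcal C_{n,i}$ is the set of all compositions of $n$. Convention: $\mathcal C_{0,0}=\mathcal C_0$ consists of the single empty composition, of length $0$, with empty exponent sum $0$ (so it contributes $1$); for $j\ge1$, $\mathcal C_{j,0}=\emptyset$. The length of $\mathbf a\in\mathcal C_{n,i}$ is $l(\mathbf a)=i$. The transitive tournament on $\{1,\ldots,n\}$ has a directed edge $(i,j)$ for each $1\le i<j\le n$. Its edges carry independent weights in $\{0,1\}$, each equal to $1$ with probability $p$. $X_n$ is the maximum, over directed paths from $1$ to $n$, of the sum of the edge weights along the path. *)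

theory Defs
  imports "HOL-Probability.Probability" "HOL-Computational_Algebra.Formal_Power_Series"
begin

definition comps :: "nat \<Rightarrow> nat \<Rightarrow> nat list set" where
  "comps n i = {as. length as = i \<and> (\<forall>a\<in>set as. 0 < a) \<and> sum_list as = n}"

definition all_comps :: "nat \<Rightarrow> nat list set" where
  "all_comps n = {as. (\<forall>a\<in>set as. 0 < a) \<and> sum_list as = n}"

definition comp_weight :: "real \<Rightarrow> nat list \<Rightarrow> real" where
  "comp_weight p as = (1 - p) ^ (\<Sum>i<length as. (as ! i + 1) choose 2)"

definition Bp :: "real \<Rightarrow> real fps" where
  "Bp p = Abs_fps (\<lambda>n. (1 - p) ^ ((n + 1) choose 2))"

definition hcoef :: "real \<Rightarrow> nat \<Rightarrow> real" where
  "hcoef p m = fps_nth (inverse (Bp p)) m"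

definition tt_edges :: "nat \<Rightarrow> (nat \<times> nat) set" where
  "tt_edges n = {(i, j). 1 \<le> i \<and> i < j \<and> j \<le> n}"

definition tt_paths :: "nat \<Rightarrow> nat list set" where
  "tt_paths n = {vs. vs \<noteq> [] \<and> hd vs = 1 \<and> last vs = n \<and> sorted_wrt (<) vs \<and> set vs \<subseteq> {1..n}}"

definition path_weight :: "(nat \<times> nat \<Rightarrow> bool) \<Rightarrow> nat list \<Rightarrow> nat" where
  "path_weight w vs = sum_list (map (\<lambda>e. if w e then 1 else 0) (zip vs (tl vs)))"

definition Xn :: "nat \<Rightarrow> (nat \<times> nat \<Rightarrow> bool) \<Rightarrow> nat" where
  "Xn n w = Max (path_weight w ` tt_paths n)"

text \<open>Independent Bernoulli(p) weights on the edges (True = weight 1).\<close>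
definition weight_pmf :: "real \<Rightarrow> nat \<Rightarrow> (nat \<times> nat \<Rightarrow> bool) pmf" where
  "weight_pmf p n = Pi_pmf (tt_edges n) False (\<lambda>_. bernoulli_pmf p)"

definition gfun :: "real \<Rightarrow> nat \<Rightarrow> real" where
  "gfun p n = 1 + measure_pmf.expectation (weight_pmf p n) (\<lambda>w. real (Xn n w))"

end

theory Submission
  imports Defs
begin

(*
  Let P_k be the set of vertices i <= k with X_i = X_k.  A heaviest path to k + 1 enters it from
  some i <= k, so X_(k+1) = X_k + 1 exactly when some edge (i, k + 1) with i in P_k has weight 1.
  Hence L_k = |P_k| is a Markov chain that drops to 1 with probability 1 - (1 - p)^L_k and
  otherwise grows by 1, and E X_(k+1) - E X_k = P(L_(k+1) = 1).  With b_t = [x^t] B_p and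
  u_t = h_0 + ... + h_t, the chain has P(L_k = l) = u_(k-l) b_(l-1), which reduces to the renewal
  identity b_0 u_k + ... + b_k u_0 = 1, i.e. B_p * (1/B_p) * 1/(1 - x) = 1/(1 - x).  So
  E X_(k+1) - E X_k = u_k and g(n) = u_0 + ... + u_(n-1).  Part (a) is the expansion of
  1/B_p = 1/(1 - (1 - B_p)) as a geometric series, grouped by compositions.
*)

section \<open>Compositions and the coefficients of the inverse series\<close>

lemma finite_comps: "finite (comps n j)"
proof (rule finite_subset)
  show "comps n j \<subseteq> {xs. set xs \<subseteq> {0..n} \<and> length xs = j}"
    by (auto simp: comps_def member_le_sum_list)
qed (rule finite_lists_length_eq, simp)

lemma length_le_sum_list_pos: "\<forall>a\<in>set as. 0 < (a::nat) \<Longrightarrow> length as \<le> sum_list as"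
  by (induction as) auto

lemma comps_0: "comps n 0 = (if n = 0 then {[]} else {})"
  by (auto simp: comps_def)

lemma comps_eq_empty: "n < j \<Longrightarrow> comps n j = {}"
  using length_le_sum_list_pos by (fastforce simp: comps_def)

lemma comps_Suc: "comps n (Suc j) = (\<Union>a\<in>{1..n}. (#) a ` comps (n - a) j)"
  by (fastforce simp: comps_def length_Suc_conv image_iff)

lemma all_comps_eq_Union_comps: "all_comps n = (\<Union>j\<le>n. comps n j)"
  using length_le_sum_list_pos by (fastforce simp: all_comps_def comps_def)

lemma sum_comps_Suc:
  "(\<Sum>as\<in>comps n (Suc j). g as) = (\<Sum>a=1..n. \<Sum>as\<in>comps (n - a) j. g (a # as))"
proof -
  have "(\<Sum>as\<in>comps n (Suc j). g as) = (\<Sum>a=1..n. \<Sum>as\<in>(#) a ` comps (n - a) j. g as)"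
    unfolding comps_Suc by (rule sum.UNION_disjoint) (auto simp: finite_comps)
  also have "\<dots> = (\<Sum>a=1..n. \<Sum>as\<in>comps (n - a) j. g (a # as))"
    by (simp add: sum.reindex)
  finally show ?thesis .
qed

lemma fps_inverse_nth_comps:
  fixes f :: "'a::field fps"
  assumes f0: "fps_nth f 0 = 1"
  shows "fps_nth (inverse f) n = (\<Sum>j\<le>n. (-1) ^ j * (\<Sum>as\<in>comps n j. \<Prod>a\<leftarrow>as. fps_nth f a))"
proof -
  define S where "S n j = (\<Sum>as\<in>comps n j. \<Prod>a\<leftarrow>as. fps_nth f a)" for n j
  define c where "c n = (\<Sum>j\<le>n. (-1) ^ j * S n j)" for n
  have S_Suc: "S n (Suc j) = (\<Sum>a=1..n. fps_nth f a * S (n - a) j)" for n j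
    by (simp add: S_def sum_comps_Suc sum_distrib_left)
  have S_0: "S n 0 = (if n = 0 then 1 else 0)" for n
    by (simp add: S_def comps_0)
  have c_rec: "c n = - (\<Sum>a=1..n. fps_nth f a * c (n - a))" if n_pos: "n \<ge> 1" for n
  proof -
    obtain m where m: "n = Suc m" using n_pos by (cases n) auto
    have "c n = (\<Sum>j<n. (-1) ^ Suc j * S n (Suc j))"
      unfolding c_def m sum.atMost_Suc_shift by (simp add: S_0 lessThan_Suc_atMost)
    also have "\<dots> = - (\<Sum>a=1..n. fps_nth f a * (\<Sum>j<n. (-1) ^ j * S (n - a) j))"
      by (simp add: S_Suc sum_distrib_left sum_negf[symmetric] sum.swap[of _ "{..<n}"] algebra_simps)
    also have "\<dots> = - (\<Sum>a=1..n. fps_nth f a * c (n - a))"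
    proof -
      have "(\<Sum>j<n. (-1) ^ j * S (n - a) j) = c (n - a)" if "a \<in> {1..n}" for a
        unfolding c_def using that
        by (intro sum.mono_neutral_right) (auto simp: S_def comps_eq_empty)
      then show ?thesis by simp
    qed
    finally show ?thesis .
  qed
  have "f * Abs_fps c = 1"
  proof (rule fps_ext)
    fix n
    show "fps_nth (f * Abs_fps c) n = fps_nth 1 n"
    proof (cases "n = 0")
      case False
      have "fps_nth (f * Abs_fps c) n = fps_nth f 0 * c n + (\<Sum>a=1..n. fps_nth f a * c (n - a))"
        by (simp add: fps_mult_nth sum.atLeast_Suc_atMost)
      then show ?thesis using c_rec[of n] False f0 by simp
    qed (simp add: f0 c_def S_0)
  qed
  then show ?thesis
    by (simp add: fps_inverse_unique c_def S_def)
qed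

lemma fps_conv_partial_sums_inverse:
  fixes f :: "'a::field fps"
  assumes "fps_nth f 0 \<noteq> 0"
  shows "(\<Sum>i\<le>k. fps_nth f i * (\<Sum>m\<le>k - i. fps_nth (inverse f) m)) = 1"
proof -
  define U where "U = inverse f * Abs_fps (\<lambda>_. 1)"
  have U_nth: "fps_nth U t = (\<Sum>m\<le>t. fps_nth (inverse f) m)" for t
    by (simp add: U_def fps_mult_nth atLeast0AtMost)
  have "f * U = Abs_fps (\<lambda>_. 1)"
    using assms by (simp add: U_def mult.assoc[symmetric] inverse_mult_eq_1')
  then have "fps_nth (f * U) k = 1" by simp
  then show ?thesis by (simp add: fps_mult_nth U_nth atLeast0AtMost)
qed

lemma sum_partial_sums:
  fixes a :: "nat \<Rightarrow> 'a::comm_semiring_1"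
  shows "(\<Sum>m<n. \<Sum>i\<le>m. a i) = (\<Sum>i<n. of_nat (n - i) * a i)"
proof (induction n)
  case (Suc n)
  have "(\<Sum>i<Suc n. of_nat (Suc n - i) * a i) = (\<Sum>i<Suc n. of_nat (n - i) * a i + a i)"
    by (intro sum.cong refl) (simp add: Suc_diff_le algebra_simps)
  also have "\<dots> = (\<Sum>i<n. of_nat (n - i) * a i) + (\<Sum>i<Suc n. a i)"
    by (simp add: sum.distrib)
  finally show ?case
    using Suc by (simp add: ac_simps flip: lessThan_Suc_atMost)
qed simp

lemma Bp_nth: "fps_nth (Bp p) n = (1 - p) ^ ((n + 1) choose 2)"
  by (simp add: Bp_def)

lemma Bp_nth_0 [simp]: "fps_nth (Bp p) 0 = 1"
  by (simp add: Bp_nth numeral_2_eq_2)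

lemma Bp_nth_Suc: "fps_nth (Bp p) (Suc n) = (1 - p) ^ Suc n * fps_nth (Bp p) n"
  by (simp add: Bp_nth numeral_2_eq_2 power_add)

lemma comp_weight_eq_prod_Bp: "comp_weight p as = (\<Prod>a\<leftarrow>as. fps_nth (Bp p) a)"
proof (induction as)
  case (Cons a as)
  then show ?case
    by (simp add: comp_weight_def Bp_nth sum.lessThan_Suc_shift power_add del: sum.lessThan_Suc)
qed (simp add: comp_weight_def)

lemma hcoef_eq_sum_comps:
  "hcoef p n = (\<Sum>j\<le>n. (-1) ^ j * (\<Sum>as\<in>comps n j. comp_weight p as))"
  by (simp add: hcoef_def fps_inverse_nth_comps comp_weight_eq_prod_Bp)

lemma hcoef_eq_sum_all_comps:
  "hcoef p n = (\<Sum>as\<in>all_comps n. (-1) ^ length as * comp_weight p as)"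
proof -
  have "(\<Sum>as\<in>all_comps n. (-1) ^ length as * comp_weight p as)
      = (\<Sum>j\<le>n. \<Sum>as\<in>comps n j. (-1) ^ length as * comp_weight p as)"
    unfolding all_comps_eq_Union_comps
    by (rule sum.UNION_disjoint) (simp_all add: finite_comps, auto simp: comps_def)
  also have "\<dots> = hcoef p n"
    by (simp add: hcoef_eq_sum_comps sum_distrib_left comps_def)
  finally show ?thesis ..
qed

definition hcoef_partial :: "real \<Rightarrow> nat \<Rightarrow> real" where
  "hcoef_partial p t = (\<Sum>m\<le>t. hcoef p m)"

lemma hcoef_partial_0 [simp]: "hcoef_partial p 0 = 1"
  by (simp add: hcoef_partial_def hcoef_def)

lemma Bp_conv_hcoef_partial: "(\<Sum>i\<le>k. fps_nth (Bp p) i * hcoef_partial p (k - i)) = 1"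
  unfolding hcoef_partial_def hcoef_def by (rule fps_conv_partial_sums_inverse) simp

lemma renewal_identity:
  assumes "1 \<le> k"
  shows "(\<Sum>l=1..k. (1 - (1 - p) ^ l) * (hcoef_partial p (k - l) * fps_nth (Bp p) (l - 1)))
    = hcoef_partial p k"
proof -
  obtain k' where k': "k = Suc k'" using assms by (cases k) auto
  have shifted: "(\<Sum>l=1..k. hcoef_partial p (k - l) * fps_nth (Bp p) (l - 1)) = 1"
    using Bp_conv_hcoef_partial[of p k'] unfolding k' One_nat_def sum.shift_bounds_cl_Suc_ivl
    by (simp add: atLeast0AtMost mult.commute)
  have unshifted: "(\<Sum>l=1..k. hcoef_partial p (k - l) * fps_nth (Bp p) l) = 1 - hcoef_partial p k"
    using Bp_conv_hcoef_partial[of p k]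
    by (simp add: atLeast0AtMost[symmetric] sum.atLeast_Suc_atMost mult.commute)
  have "(\<Sum>l=1..k. (1 - (1 - p) ^ l) * (hcoef_partial p (k - l) * fps_nth (Bp p) (l - 1)))
      = (\<Sum>l=1..k. hcoef_partial p (k - l) * fps_nth (Bp p) (l - 1)
                     - hcoef_partial p (k - l) * fps_nth (Bp p) l)"
  proof (intro sum.cong refl)
    fix l assume "l \<in> {1..k}"
    then obtain m where "l = Suc m" by (cases l) auto
    then show "(1 - (1 - p) ^ l) * (hcoef_partial p (k - l) * fps_nth (Bp p) (l - 1))
      = hcoef_partial p (k - l) * fps_nth (Bp p) (l - 1) - hcoef_partial p (k - l) * fps_nth (Bp p) l"
      by (simp add: Bp_nth_Suc algebra_simps)
  qed
  also have "\<dots> = hcoef_partial p k"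
    by (simp only: sum_subtractf shifted unshifted)
  finally show ?thesis .
qed

section \<open>Heaviest paths in the transitive tournament\<close>

lemma path_weight_Nil [simp]: "path_weight w [] = 0"
  and path_weight_single [simp]: "path_weight w [x] = 0"
  and path_weight_Cons_Cons [simp]:
    "path_weight w (x # y # vs) = of_bool (w (x, y)) + path_weight w (y # vs)"
  by (simp_all add: path_weight_def)

lemma path_weight_snoc:
  "vs \<noteq> [] \<Longrightarrow> path_weight w (vs @ [j]) = path_weight w vs + of_bool (w (last vs, j))"
  by (induction vs rule: induct_list012) auto

lemma sorted_wrt_less_le_last:
  fixes xs :: "'a::linorder list"
  shows "sorted_wrt (<) xs \<Longrightarrow> x \<in> set xs \<Longrightarrow> x \<le> last xs"
  by (induction xs) (auto simp: less_imp_le dest: last_in_set)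

lemma finite_tt_paths: "finite (tt_paths n)"
proof (rule finite_subset)
  show "tt_paths n \<subseteq> {xs. set xs \<subseteq> {1..n} \<and> length xs \<le> n}"
  proof safe
    fix vs assume "vs \<in> tt_paths n"
    then have "distinct vs" and vs_n: "set vs \<subseteq> {1..n}"
      by (auto simp: tt_paths_def strict_sorted_iff)
    then have "length vs = card (set vs)" by (simp add: distinct_card)
    also have "\<dots> \<le> n" using card_mono[OF _ vs_n] by simp
    finally show "length vs \<le> n" .
  qed (auto simp: tt_paths_def)
qed (rule finite_lists_length_le, simp)

lemma tt_paths_1: "tt_paths 1 = {[1]}"
proof -
  have "vs = [1]" if "vs \<in> tt_paths 1" for vs
    using that by (cases vs rule: remdups_adj.cases) (auto simp: tt_paths_def)
  then show ?thesis by (auto simp: tt_paths_def)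
qed

lemma tt_paths_Suc:
  assumes "1 \<le> k"
  shows "vs \<in> tt_paths (Suc k) \<longleftrightarrow> (\<exists>i\<in>{1..k}. \<exists>ys\<in>tt_paths i. vs = ys @ [Suc k])"
proof
  assume vs: "vs \<in> tt_paths (Suc k)"
  then have "vs \<noteq> []" and hd_vs: "hd vs = 1" and "last vs = Suc k" and sorted_vs: "sorted_wrt (<) vs"
    and vs_range: "set vs \<subseteq> {1..Suc k}"
    by (auto simp: tt_paths_def)
  define ys where "ys = butlast vs"
  have vs_eq: "vs = ys @ [Suc k]"
    unfolding ys_def using \<open>vs \<noteq> []\<close> \<open>last vs = Suc k\<close> by (metis append_butlast_last_id)
  have "ys \<noteq> []" using hd_vs vs_eq assms by (cases ys) auto
  then have "last ys \<in> set ys" and "hd ys = 1"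
    using hd_vs vs_eq by auto
  have sorted_ys: "sorted_wrt (<) ys" and ys_less: "\<forall>x\<in>set ys. x < Suc k"
    using sorted_vs vs_eq by (auto simp: sorted_wrt_append)
  have "set ys \<subseteq> {1..last ys}"
    using vs_range vs_eq sorted_wrt_less_le_last[OF sorted_ys] by auto
  then have "ys \<in> tt_paths (last ys)"
    using \<open>ys \<noteq> []\<close> \<open>hd ys = 1\<close> sorted_ys by (simp add: tt_paths_def)
  moreover have "last ys \<in> {1..k}"
    using \<open>set ys \<subseteq> {1..last ys}\<close> ys_less \<open>last ys \<in> set ys\<close> by fastforce
  ultimately show "\<exists>i\<in>{1..k}. \<exists>ys\<in>tt_paths i. vs = ys @ [Suc k]"
    using vs_eq by blast
next
  assume "\<exists>i\<in>{1..k}. \<exists>ys\<in>tt_paths i. vs = ys @ [Suc k]"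
  then obtain i ys where "i \<le> k" and ys: "ys \<in> tt_paths i" and "vs = ys @ [Suc k]"
    by auto
  moreover have "\<forall>x\<in>set ys. x < Suc k"
    using ys \<open>i \<le> k\<close> by (auto simp: tt_paths_def)
  ultimately show "vs \<in> tt_paths (Suc k)"
    using ys by (auto simp: tt_paths_def sorted_wrt_append)
qed

lemma tt_paths_nonempty: "1 \<le> k \<Longrightarrow> tt_paths k \<noteq> {}"
proof (induction k rule: nat_induct_at_least)
  case (Suc k)
  then obtain ys where "ys \<in> tt_paths k" by blast
  then have "ys @ [Suc k] \<in> tt_paths (Suc k)"
    using tt_paths_Suc[OF Suc.hyps, of "ys @ [Suc k]"] Suc.hyps by auto
  then show ?case by blast
qed (use tt_paths_1 in auto)

lemma path_weight_le_Xn: "vs \<in> tt_paths k \<Longrightarrow> path_weight w vs \<le> Xn k w"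
  unfolding Xn_def using finite_tt_paths by (intro Max_ge) auto

lemma Xn_attained:
  assumes "1 \<le> k"
  obtains vs where "vs \<in> tt_paths k" "path_weight w vs = Xn k w"
proof -
  have "Xn k w \<in> path_weight w ` tt_paths k"
    unfolding Xn_def using finite_tt_paths tt_paths_nonempty[OF assms] by (intro Max_in) auto
  then show ?thesis using that by auto
qed

lemma Xn_1: "Xn 1 w = 0"
  unfolding Xn_def tt_paths_1 by simp

lemma Xn_Suc_ge: "i \<in> {1..k} \<Longrightarrow> Xn i w + of_bool (w (i, Suc k)) \<le> Xn (Suc k) w"
proof -
  assume i: "i \<in> {1..k}"
  then have "1 \<le> i" "1 \<le> k" by auto
  obtain vs where vs: "vs \<in> tt_paths i" "path_weight w vs = Xn i w"
    using Xn_attained[OF \<open>1 \<le> i\<close>] by blast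
  then have "vs @ [Suc k] \<in> tt_paths (Suc k)"
    using tt_paths_Suc[OF \<open>1 \<le> k\<close>] i by blast
  then have "path_weight w (vs @ [Suc k]) \<le> Xn (Suc k) w"
    by (rule path_weight_le_Xn)
  moreover have "vs \<noteq> []" "last vs = i"
    using vs(1) by (auto simp: tt_paths_def)
  ultimately show ?thesis
    using path_weight_snoc[of vs] vs(2) by simp
qed

lemma Xn_Suc_le:
  assumes "1 \<le> k"
  obtains i where "i \<in> {1..k}" "Xn (Suc k) w \<le> Xn i w + of_bool (w (i, Suc k))"
proof -
  obtain vs where "vs \<in> tt_paths (Suc k)" and vs_max: "path_weight w vs = Xn (Suc k) w"
    by (rule Xn_attained[of "Suc k"]) auto
  then obtain i ys where i: "i \<in> {1..k}" and ys: "ys \<in> tt_paths i" and "vs = ys @ [Suc k]"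
    using tt_paths_Suc[OF assms] by blast
  moreover have "ys \<noteq> []" "last ys = i"
    using ys by (auto simp: tt_paths_def)
  ultimately have "Xn (Suc k) w = path_weight w ys + of_bool (w (i, Suc k))"
    using vs_max path_weight_snoc[of ys w "Suc k"] by simp
  also have "\<dots> \<le> Xn i w + of_bool (w (i, Suc k))"
    using path_weight_le_Xn[OF ys] by simp
  finally show ?thesis using that i by blast
qed

lemma Xn_mono:
  assumes "1 \<le> i" "i \<le> j"
  shows "Xn i w \<le> Xn j w"
  using assms(2)
proof (induction j rule: dec_induct)
  case (step j)
  then show ?case using Xn_Suc_ge[of j j w] assms(1) by simp
qed simp

text \<open>As \<^const>\<open>Xn\<close> is monotone, this is the final run of vertices on which it attains
  its value at \<open>k\<close>.\<close>
definition plateau :: "nat \<Rightarrow> (nat \<times> nat \<Rightarrow> bool) \<Rightarrow> nat set" where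
  "plateau k w = {i\<in>{1..k}. Xn i w = Xn k w}"

lemma Xn_Suc:
  assumes k: "1 \<le> k"
  shows "Xn (Suc k) w = Xn k w + of_bool (\<exists>i\<in>plateau k w. w (i, Suc k))"
proof -
  obtain i where i: "i \<in> {1..k}" and Xn_le: "Xn (Suc k) w \<le> Xn i w + of_bool (w (i, Suc k))"
    using Xn_Suc_le[OF k] by blast
  have "Xn i w \<le> Xn k w" using i Xn_mono by simp
  have "Xn k w \<le> Xn (Suc k) w" using Xn_Suc_ge[of k k w] k by simp
  show ?thesis
  proof (cases "\<exists>i\<in>plateau k w. w (i, Suc k)")
    case True
    then obtain j where "j \<in> {1..k}" "Xn j w = Xn k w" "w (j, Suc k)"
      by (auto simp: plateau_def)
    then have "Xn k w + 1 \<le> Xn (Suc k) w" using Xn_Suc_ge[of j k w] by simp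
    moreover have "Xn (Suc k) w \<le> Xn k w + 1"
      using Xn_le \<open>Xn i w \<le> Xn k w\<close> by (cases "w (i, Suc k)") auto
    ultimately show ?thesis using True by simp
  next
    case False
    then have "Xn i w < Xn k w \<or> \<not> w (i, Suc k)"
      using i \<open>Xn i w \<le> Xn k w\<close> by (auto simp: plateau_def)
    then have "Xn (Suc k) w \<le> Xn k w"
      using Xn_le \<open>Xn i w \<le> Xn k w\<close> by (cases "w (i, Suc k)") auto
    then show ?thesis using False \<open>Xn k w \<le> Xn (Suc k) w\<close> by simp
  qed
qed

lemma plateau_Suc:
  assumes k: "1 \<le> k"
  shows "plateau (Suc k) w =
    (if \<exists>i\<in>plateau k w. w (i, Suc k) then {Suc k} else insert (Suc k) (plateau k w))"
proof (cases "\<exists>i\<in>plateau k w. w (i, Suc k)")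
  case True
  have "Xn i w \<noteq> Xn (Suc k) w" if "i \<in> {1..k}" for i
    using Xn_mono[of i k w] that Xn_Suc[OF k, of w] True by auto
  then show ?thesis using True by (auto simp: plateau_def le_Suc_eq)
next
  case False
  then show ?thesis using Xn_Suc[OF k, of w] by (auto simp: plateau_def le_Suc_eq)
qed

lemma card_plateau: "1 \<le> k \<Longrightarrow> card (plateau k w) \<in> {1..k}"
proof -
  assume "1 \<le> k"
  then have "k \<in> plateau k w" by (simp add: plateau_def)
  moreover have "plateau k w \<subseteq> {1..k}" by (auto simp: plateau_def)
  ultimately show ?thesis
    using card_mono[of "{1..k}" "plateau k w"] card_gt_0_iff[of "plateau k w"]
    by (auto dest: finite_subset)
qed

lemma card_plateau_Suc:
  assumes "1 \<le> k"
  shows "card (plateau (Suc k) w) =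
    (if \<exists>i\<in>plateau k w. w (i, Suc k) then 1 else Suc (card (plateau k w)))"
proof -
  have "finite (plateau k w)" "Suc k \<notin> plateau k w" by (auto simp: plateau_def)
  then show ?thesis by (simp add: plateau_Suc[OF assms])
qed

lemma Xn_Suc_eq_card_plateau:
  assumes "1 \<le> k"
  shows "Xn (Suc k) w = Xn k w + of_bool (card (plateau (Suc k) w) = 1)"
  using Xn_Suc[OF assms] card_plateau_Suc[OF assms] card_plateau[OF assms, of w] by auto

lemma path_weight_cong:
  "(\<And>e. e \<in> tt_edges k \<Longrightarrow> w e = w' e) \<Longrightarrow> sorted_wrt (<) vs \<Longrightarrow> set vs \<subseteq> {1..k}
    \<Longrightarrow> path_weight w vs = path_weight w' vs"
proof (induction vs rule: induct_list012)
  case (3 x y vs)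
  then have "(x, y) \<in> tt_edges k" by (auto simp: tt_edges_def)
  then show ?case using 3 by auto
qed auto

lemma Xn_cong: "(\<And>e. e \<in> tt_edges k \<Longrightarrow> w e = w' e) \<Longrightarrow> Xn k w = Xn k w'"
  unfolding Xn_def
  by (intro arg_cong[where f = Max] image_cong refl path_weight_cong) (auto simp: tt_paths_def)

lemma plateau_cong: "(\<And>e. e \<in> tt_edges k \<Longrightarrow> w e = w' e) \<Longrightarrow> plateau k w = plateau k w'"
  unfolding plateau_def
  by (intro Collect_cong conj_cong refl arg_cong2[where f = "(=)"] Xn_cong) (auto simp: tt_edges_def)

section \<open>The plateau size as a Markov chain\<close>

lemma finite_set_Pi_pmf_bool: "finite A \<Longrightarrow> finite (set_pmf (Pi_pmf A dflt (p :: 'a \<Rightarrow> bool pmf)))"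
  by (rule finite_subset[OF set_Pi_pmf_subset']) auto

lemma Pi_pmf_bernoulli_ex:
  assumes "finite A" "S \<subseteq> A" "0 \<le> p" "p \<le> 1"
  shows "map_pmf (\<lambda>g. \<exists>e\<in>S. g e) (Pi_pmf A False (\<lambda>_. bernoulli_pmf p))
    = bernoulli_pmf (1 - (1 - p) ^ card S)"
proof -
  let ?M = "Pi_pmf A False (\<lambda>_. bernoulli_pmf p)"
  define B where "B e = (if e \<in> S then {False} else UNIV)" for e
  have "{g. \<not> (\<exists>e\<in>S. g e)} = Pi A B"
    using assms(2) by (auto simp: B_def Pi_def)
  then have "measure_pmf.prob ?M {g. \<not> (\<exists>e\<in>S. g e)} = (\<Prod>e\<in>A. measure_pmf.prob (bernoulli_pmf p) (B e))"
    using measure_Pi_pmf_Pi[OF assms(1)] by simp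
  also have "\<dots> = (\<Prod>e\<in>A. if e \<in> S then 1 - p else 1)"
    using assms(3,4) by (intro prod.cong refl) (simp add: B_def measure_pmf_single)
  also have "\<dots> = (1 - p) ^ card S"
    using assms(1,2) by (simp add: prod.If_cases Int_absorb1)
  finally have none: "measure_pmf.prob ?M {g. \<not> (\<exists>e\<in>S. g e)} = (1 - p) ^ card S" .
  then have some: "measure_pmf.prob ?M {g. \<exists>e\<in>S. g e} = 1 - (1 - p) ^ card S"
    using measure_pmf.prob_compl[of "{g. \<not> (\<exists>e\<in>S. g e)}" ?M]
    by (simp add: Compl_eq_Diff_UNIV[symmetric] Collect_neg_eq[symmetric])
  have "0 \<le> (1 - p) ^ card S" "(1 - p) ^ card S \<le> 1"
    using assms(3,4) by (auto intro: power_le_one)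
  show ?thesis
  proof (rule pmf_eqI)
    fix b :: bool
    show "pmf (map_pmf (\<lambda>g. \<exists>e\<in>S. g e) ?M) b = pmf (bernoulli_pmf (1 - (1 - p) ^ card S)) b"
      using none some \<open>0 \<le> (1 - p) ^ card S\<close> \<open>(1 - p) ^ card S \<le> 1\<close>
      by (cases b) (simp_all add: pmf_map vimage_def)
  qed
qed

definition new_edges :: "nat \<Rightarrow> (nat \<times> nat) set" where
  "new_edges k = (\<lambda>i. (i, Suc k)) ` {1..k}"

definition column_pmf :: "real \<Rightarrow> nat \<Rightarrow> (nat \<times> nat \<Rightarrow> bool) pmf" where
  "column_pmf p k = Pi_pmf (new_edges k) False (\<lambda>_. bernoulli_pmf p)"

lemma finite_tt_edges: "finite (tt_edges k)"
  by (rule finite_subset[of _ "{1..k} \<times> {1..k}"]) (auto simp: tt_edges_def)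

lemma weight_pmf_Suc:
  "weight_pmf p (Suc k) = map_pmf (\<lambda>(f, g) e. if e \<in> tt_edges k then f e else g e)
     (pair_pmf (weight_pmf p k) (column_pmf p k))"
proof -
  have "tt_edges (Suc k) = tt_edges k \<union> new_edges k" "tt_edges k \<inter> new_edges k = {}"
    by (auto simp: tt_edges_def new_edges_def le_Suc_eq)
  then show ?thesis
    unfolding weight_pmf_def column_pmf_def
    using finite_tt_edges by (simp add: Pi_pmf_union new_edges_def)
qed

lemma map_pmf_weight_pmf_Suc:
  assumes "\<And>w w'. (\<And>e. e \<in> tt_edges k \<Longrightarrow> w e = w' e) \<Longrightarrow> F w = F w'"
  shows "map_pmf F (weight_pmf p (Suc k)) = map_pmf F (weight_pmf p k)"
proof -
  have "map_pmf F (weight_pmf p (Suc k))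
      = map_pmf (\<lambda>(f, g). F f) (pair_pmf (weight_pmf p k) (column_pmf p k))"
    unfolding weight_pmf_Suc pmf.map_comp
    by (intro map_pmf_cong refl) (auto intro: assms)
  also have "\<dots> = map_pmf F (weight_pmf p k)"
    by (simp add: case_prod_unfold map_fst_pair_pmf flip: pmf.map_comp[unfolded o_def])
  finally show ?thesis .
qed

definition plateau_size_pmf :: "real \<Rightarrow> nat \<Rightarrow> nat pmf" where
  "plateau_size_pmf p k = map_pmf (\<lambda>w. card (plateau k w)) (weight_pmf p k)"

definition plateau_step :: "real \<Rightarrow> nat \<Rightarrow> nat pmf" where
  "plateau_step p l = map_pmf (\<lambda>b. if b then 1 else Suc l) (bernoulli_pmf (1 - (1 - p) ^ l))"

lemma plateau_size_pmf_Suc: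
  assumes p: "0 \<le> p" "p \<le> 1" and k: "1 \<le> k"
  shows "plateau_size_pmf p (Suc k) = bind_pmf (plateau_size_pmf p k) (plateau_step p)"
proof -
  let ?merge = "\<lambda>f g e. if e \<in> tt_edges k then f e else g e"
  have "plateau_size_pmf p (Suc k)
      = bind_pmf (weight_pmf p k) (\<lambda>f. map_pmf (\<lambda>g. card (plateau (Suc k) (?merge f g))) (column_pmf p k))"
    by (simp add: plateau_size_pmf_def weight_pmf_Suc pair_pmf_def map_bind_pmf bind_return_pmf
        bind_assoc_pmf map_pmf_def)
  also have "\<dots> = bind_pmf (weight_pmf p k) (\<lambda>f. plateau_step p (card (plateau k f)))"
  proof (intro bind_pmf_cong refl)
    fix f
    define S where "S = (\<lambda>i. (i, Suc k)) ` plateau k f"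
    have S_sub: "S \<subseteq> new_edges k" by (auto simp: S_def new_edges_def plateau_def)
    have card_S: "card S = card (plateau k f)"
      unfolding S_def by (rule card_image) (simp add: inj_on_def)
    have "plateau k (?merge f g) = plateau k f" for g
      by (rule plateau_cong) simp
    moreover have "?merge f g (i, Suc k) = g (i, Suc k)" for g i
      by (simp add: tt_edges_def)
    ultimately have "card (plateau (Suc k) (?merge f g))
        = (if \<exists>e\<in>S. g e then 1 else Suc (card (plateau k f)))" for g
      by (simp add: card_plateau_Suc[OF k] S_def)
    then have "map_pmf (\<lambda>g. card (plateau (Suc k) (?merge f g))) (column_pmf p k)
        = map_pmf (\<lambda>b. if b then 1 else Suc (card (plateau k f)))
            (map_pmf (\<lambda>g. \<exists>e\<in>S. g e) (column_pmf p k))"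
      by (simp add: pmf.map_comp o_def)
    also have "\<dots> = plateau_step p (card (plateau k f))"
      unfolding column_pmf_def plateau_step_def card_S[symmetric]
      by (subst Pi_pmf_bernoulli_ex[OF _ S_sub p]) (simp_all add: new_edges_def)
    finally show "map_pmf (\<lambda>g. card (plateau (Suc k) (?merge f g))) (column_pmf p k)
        = plateau_step p (card (plateau k f))" .
  qed
  also have "\<dots> = bind_pmf (plateau_size_pmf p k) (plateau_step p)"
    by (simp add: plateau_size_pmf_def bind_map_pmf)
  finally show ?thesis .
qed

lemma pmf_plateau_step:
  assumes "0 \<le> p" "p \<le> 1" "1 \<le> l"
  shows "pmf (plateau_step p l) x =
    (if x = 1 then 1 - (1 - p) ^ l else if x = Suc l then (1 - p) ^ l else 0)"
proof -
  have "0 \<le> (1 - p) ^ l" "(1 - p) ^ l \<le> 1"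
    using assms by (auto intro: power_le_one)
  moreover have "(\<lambda>b. if b then 1 else Suc l) -` {x} =
      (if x = 1 then {True} else if x = Suc l then {False} else {})"
    using assms(3) by (cases "x = 1") (auto simp: vimage_def)
  ultimately show ?thesis
    using assms(3) by (simp add: plateau_step_def pmf_map measure_pmf_single)
qed

lemma plateau_size_pmf_1: "plateau_size_pmf p 1 = return_pmf 1"
proof -
  have "plateau_size_pmf p 1 = map_pmf (\<lambda>_. 1) (weight_pmf p 1)"
    unfolding plateau_size_pmf_def using card_plateau[of 1] by (intro map_pmf_cong refl) auto
  then show ?thesis by simp
qed

lemma pmf_plateau_size_pmf_Suc:
  assumes p: "0 \<le> p" "p \<le> 1" and k: "1 \<le> k"
  shows "pmf (plateau_size_pmf p (Suc k)) l = (\<Sum>m\<in>{1..k}.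
    (if l = 1 then 1 - (1 - p) ^ m else if l = Suc m then (1 - p) ^ m else 0) * pmf (plateau_size_pmf p k) m)"
proof -
  have support: "set_pmf (plateau_size_pmf p k) \<subseteq> {1..k}"
    using card_plateau[OF k] by (auto simp: plateau_size_pmf_def)
  have "pmf (plateau_size_pmf p (Suc k)) l
      = (\<Sum>m\<in>{1..k}. pmf (plateau_step p m) l * pmf (plateau_size_pmf p k) m)"
    unfolding plateau_size_pmf_Suc[OF p k] pmf_bind
    by (rule integral_measure_pmf_real) (use support in auto)
  then show ?thesis
    by (simp add: pmf_plateau_step[OF p])
qed

lemma pmf_plateau_size_pmf:
  assumes p: "0 \<le> p" "p \<le> 1" and "1 \<le> k"
  shows "pmf (plateau_size_pmf p k) l =
    (if l \<in> {1..k} then hcoef_partial p (k - l) * fps_nth (Bp p) (l - 1) else 0)"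
  using \<open>1 \<le> k\<close>
proof (induction k arbitrary: l rule: nat_induct_at_least)
  case base
  show ?case unfolding plateau_size_pmf_1 by simp
next
  case (Suc k)
  let ?u = "\<lambda>m. hcoef_partial p (k - m) * fps_nth (Bp p) (m - 1)"
  have "pmf (plateau_size_pmf p (Suc k)) l = (\<Sum>m\<in>{1..k}.
      (if l = 1 then 1 - (1 - p) ^ m else if l = Suc m then (1 - p) ^ m else 0) * ?u m)"
    by (simp add: pmf_plateau_size_pmf_Suc[OF p Suc.hyps] Suc.IH)
  also have "\<dots> = (if l \<in> {1..Suc k} then hcoef_partial p (Suc k - l) * fps_nth (Bp p) (l - 1) else 0)"
  proof (cases "l = 1")
    case True
    then show ?thesis using renewal_identity[OF Suc.hyps, of p] by simp
  next
    case False
    then have "(\<Sum>m\<in>{1..k}.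
        (if l = 1 then 1 - (1 - p) ^ m else if l = Suc m then (1 - p) ^ m else 0) * ?u m)
        = (\<Sum>m\<in>{1..k}. if m = l - 1 then (1 - p) ^ m * ?u m else 0)"
      by (intro sum.cong refl) auto
    also have "\<dots> = (if l - 1 \<in> {1..k} then (1 - p) ^ (l - 1) * ?u (l - 1) else 0)"
      by (simp only: sum.delta finite_atLeastAtMost)
    also have "\<dots> = (if l \<in> {1..Suc k} then hcoef_partial p (Suc k - l) * fps_nth (Bp p) (l - 1) else 0)"
    proof (cases "l - 1 \<in> {1..k}")
      case True
      then have "2 \<le> l" by auto
      then obtain j where "l = j + 2" by (metis add.commute le_Suc_ex)
      with True show ?thesis by (simp add: Bp_nth_Suc)
    qed (use False in auto)
    finally show ?thesis .
  qed
  finally show ?case .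
qed

lemma finite_set_weight_pmf: "finite (set_pmf (weight_pmf p k))"
  unfolding weight_pmf_def by (intro finite_set_Pi_pmf_bool finite_tt_edges)

lemma expectation_Xn_Suc:
  assumes p: "0 \<le> p" "p \<le> 1" and k: "1 \<le> k"
  shows "measure_pmf.expectation (weight_pmf p (Suc k)) (\<lambda>w. real (Xn (Suc k) w))
    = measure_pmf.expectation (weight_pmf p k) (\<lambda>w. real (Xn k w)) + hcoef_partial p k"
proof -
  let ?E = "measure_pmf.expectation (weight_pmf p (Suc k))"
  have "?E (\<lambda>w. real (Xn (Suc k) w))
      = ?E (\<lambda>w. real (Xn k w)) + ?E (\<lambda>w. of_bool (card (plateau (Suc k) w) = 1))"
    unfolding Xn_Suc_eq_card_plateau[OF k] of_nat_add of_nat_of_bool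
    by (intro Bochner_Integration.integral_add integrable_measure_pmf_finite finite_set_weight_pmf)
  also have "?E (\<lambda>w. real (Xn k w)) = measure_pmf.expectation (map_pmf (Xn k) (weight_pmf p (Suc k))) real"
    by simp
  also have "map_pmf (Xn k) (weight_pmf p (Suc k)) = map_pmf (Xn k) (weight_pmf p k)"
    by (rule map_pmf_weight_pmf_Suc) (rule Xn_cong)
  also have "?E (\<lambda>w. of_bool (card (plateau (Suc k) w) = 1))
      = measure_pmf.expectation (plateau_size_pmf p (Suc k)) (\<lambda>l. of_bool (l = 1) :: real)"
    by (simp add: plateau_size_pmf_def)
  also have "\<dots> = pmf (plateau_size_pmf p (Suc k)) 1"
    by (subst integral_measure_pmf_real[where A = "{1}"]) auto
  also have "\<dots> = hcoef_partial p k"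
    using pmf_plateau_size_pmf[OF p, of "Suc k" 1] by simp
  finally show ?thesis by simp
qed

lemma gfun_eq_sum_hcoef_partial:
  assumes p: "0 \<le> p" "p \<le> 1" and "1 \<le> n"
  shows "gfun p n = (\<Sum>m<n. hcoef_partial p m)"
  using \<open>1 \<le> n\<close>
proof (induction n rule: nat_induct_at_least)
  case base
  show ?case unfolding gfun_def Xn_1 by simp
next
  case (Suc n)
  then show ?case by (simp add: gfun_def expectation_Xn_Suc[OF p])
qed

theorem corollary4:
  fixes p :: real
  assumes "0 < p" and "p < 1"
  shows "(\<forall>n\<ge>1. hcoef p n = (\<Sum>j=1..n. (-1) ^ j * (\<Sum>a\<in>comps n j. comp_weight p a)))
    \<and> (\<forall>n\<ge>1.
         gfun p n = (\<Sum>m<n. real (n - m) * hcoef p m)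
       \<and> gfun p n = (\<Sum>m<n. real (n - m) *
            (\<Sum>a\<in>all_comps m. (-1) ^ length a * comp_weight p a))
       \<and> gfun p n = (\<Sum>m<n. \<Sum>j\<le>m. \<Sum>k\<le>j. (-1) ^ k * (\<Sum>a\<in>comps j k. comp_weight p a)))"
proof (intro conjI allI impI)
  fix n :: nat
  assume "n \<ge> 1"
  then show "hcoef p n = (\<Sum>j=1..n. (-1) ^ j * (\<Sum>a\<in>comps n j. comp_weight p a))"
    by (simp add: hcoef_eq_sum_comps atMost_atLeast0 sum.atLeast_Suc_atMost comps_0)
next
  fix n :: nat
  assume "n \<ge> 1"
  then have g: "gfun p n = (\<Sum>m<n. hcoef_partial p m)"
    using assms by (intro gfun_eq_sum_hcoef_partial) auto
  show h: "gfun p n = (\<Sum>m<n. real (n - m) * hcoef p m)"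
    unfolding g hcoef_partial_def by (rule sum_partial_sums)
  show "gfun p n = (\<Sum>m<n. real (n - m) * (\<Sum>a\<in>all_comps m. (-1) ^ length a * comp_weight p a))"
    unfolding h hcoef_eq_sum_all_comps ..
  show "gfun p n = (\<Sum>m<n. \<Sum>j\<le>m. \<Sum>k\<le>j. (-1) ^ k * (\<Sum>a\<in>comps j k. comp_weight p a))"
    unfolding g hcoef_partial_def hcoef_eq_sum_comps ..
qed

end
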